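(* For every integer $d\geq 2$ there exist $\epsilon=\epsilon(d)>0$ and $\eta=\eta(d)>0$ such that the following holds. Let $X$ be a distance-regular graph of diameter $d$ on $n$ vertices and degree $k$. If $k_t\geq (1-\epsilon)n$ for some $t\in\{1,\dots,d\}$, then the zero-weight spectral radius $\xi$ of $X$ satisfies $\xi\leq k(1-\eta)$.
   Context: A connected graph $X$ of diameter $d$ is distance-regular if there are integers $a_i,b_i,c_i$ ($0\le i\le d$) such that for all vertices $v,w$ with $\mathrm{dist}(v,w)=i$, the vertex $w$ has exactly $c_i$ neighbours at distance $i-1$ from $v$, $a_i$ neighbours at distance $i$ from $v$, and $b_i$ neighbours at distance $i+1$ from $v$. Then $X$ is $k$-regular with $k=b_0$, $c_0=b_d=0$, $c_1=1$ and $a_i+b_i+c_i=k$. For $0\le i\le d$, $k_i$ denotes the number of vertices at distance exactly $i$ from a fixed vertex (independent of the vertex). If the eigenvalues of the adjacency matrix of a $k$-regular graph on $n$ vertices are $k=\xi_1\geq\xi_2\geq\dots\geq\xi_n$, the zero-weight spectral radius is $\xi=\max\{|\xi_i|:2\le i\le n\}$. *)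

theory Defs
  imports "Jordan_Normal_Form.Char_Poly"
begin

definition simple_graph :: "nat \<Rightarrow> (nat \<Rightarrow> nat \<Rightarrow> bool) \<Rightarrow> bool" where
  "simple_graph n E \<longleftrightarrow> (\<forall>u v. E u v \<longrightarrow> u < n \<and> v < n) \<and>
                         (\<forall>u v. E u v \<longrightarrow> E v u) \<and> (\<forall>u. \<not> E u u)"

definition has_walk :: "nat \<Rightarrow> (nat \<Rightarrow> nat \<Rightarrow> bool) \<Rightarrow> nat \<Rightarrow> nat \<Rightarrow> nat \<Rightarrow> bool" where
  "has_walk n E m v w \<longleftrightarrow> (\<exists>f. f 0 = v \<and> f m = w \<and> (\<forall>i\<le>m. f i < n) \<and>
                                   (\<forall>i<m. E (f i) (f (Suc i))))"

definition graph_connected :: "nat \<Rightarrow> (nat \<Rightarrow> nat \<Rightarrow> bool) \<Rightarrow> bool" where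
  "graph_connected n E \<longleftrightarrow> (\<forall>v<n. \<forall>w<n. \<exists>m. has_walk n E m v w)"

definition gdist :: "nat \<Rightarrow> (nat \<Rightarrow> nat \<Rightarrow> bool) \<Rightarrow> nat \<Rightarrow> nat \<Rightarrow> nat" where
  "gdist n E v w = (LEAST m. has_walk n E m v w)"

definition diameter :: "nat \<Rightarrow> (nat \<Rightarrow> nat \<Rightarrow> bool) \<Rightarrow> nat" where
  "diameter n E = Max {gdist n E v w | v w. v < n \<and> w < n}"

definition k_regular :: "nat \<Rightarrow> (nat \<Rightarrow> nat \<Rightarrow> bool) \<Rightarrow> nat \<Rightarrow> bool" where
  "k_regular n E k \<longleftrightarrow> (\<forall>v<n. card {u. u < n \<and> E v u} = k)"

definition distance_regular :: "nat \<Rightarrow> (nat \<Rightarrow> nat \<Rightarrow> bool) \<Rightarrow> bool" where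
  "distance_regular n E \<longleftrightarrow> simple_graph n E \<and> 0 < n \<and> graph_connected n E \<and>
     (\<exists>a b c :: nat \<Rightarrow> nat. \<forall>i \<le> diameter n E. \<forall>v<n. \<forall>w<n. gdist n E v w = i \<longrightarrow>
        card {u. u < n \<and> E w u \<and> Suc (gdist n E v u) = i} = c i \<and>
        card {u. u < n \<and> E w u \<and> gdist n E v u = i} = a i \<and>
        card {u. u < n \<and> E w u \<and> gdist n E v u = Suc i} = b i)"

definition k_dist :: "nat \<Rightarrow> (nat \<Rightarrow> nat \<Rightarrow> bool) \<Rightarrow> nat \<Rightarrow> nat \<Rightarrow> nat" where
  "k_dist n E v i = card {w. w < n \<and> gdist n E v w = i}"

definition adj_matrix :: "nat \<Rightarrow> (nat \<Rightarrow> nat \<Rightarrow> bool) \<Rightarrow> real mat" where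
  "adj_matrix n E = mat n n (\<lambda>(i, j). if E i j then 1 else 0)"

definition eigenvalues_desc :: "real mat \<Rightarrow> real list" where
  "eigenvalues_desc A = (THE es. length es = dim_row A \<and> sorted_wrt (\<ge>) es \<and>
      char_poly A = prod_list (map (\<lambda>a. [:- a, 1:]) es))"

text \<open>Zero-weight spectral radius: max |xi_i| over 2 <= i <= n (1-based).\<close>
definition zero_weight_spectral_radius :: "real mat \<Rightarrow> real" where
  "zero_weight_spectral_radius A =
     Max ((\<lambda>i. \<bar>eigenvalues_desc A ! i\<bar>) ` {1..<dim_row A})"

end

theory Submission
  imports Defs
begin

text \<open>The adjacency matrix A is symmetric with constant row sums k, so its characteristic
  polynomial is (x - k) times that of the matrix of A on the vectors with coordinate sum zero.
  Hence the other eigenvalues are real, and bounded in absolute value by every \<mu> with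
  |y' A y| \<le> \<mu> |y|^2 for all such vectors y.

  To bound y' A y, fix a sign s = 1 or s = -1 and let Q_i be the sum of (y_u - s^i y_w)^2 over
  the pairs (u, w) at distance i, so that Q_1 = 2 k |y|^2 - 2 s y' A y. Splitting each pair at
  distance i + 1 along a geodesic into a pair at distance i and an edge, Cauchy-Schwarz and the
  intersection numbers give k Q_i \<le> i^2 k_i Q_1. On the other hand, since y sums to zero, the sum
  of (y_u - s^t y_w)^2 over all pairs is 2 n |y|^2, and the pairs not at distance t contribute at
  most 4 (n - k_t) |y|^2. So k_t \<ge> 3n/4 gives Q_t \<ge> n |y|^2, hence Q_1 \<ge> k |y|^2 / d^2, that is,
  s y' A y \<le> (1 - 1/(2 d^2)) k |y|^2: one may take \<epsilon> = 1/4 and \<eta> = 1/(2 d^2).\<close>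

section \<open>Characteristic polynomials that split into linear factors\<close>

lemma proots_prod_linear_factors:
  "proots (\<Prod>a\<leftarrow>xs. [:- a, 1:]) = mset (xs :: 'a :: idom list)"
proof (induction xs)
  case (Cons a xs)
  have "proots (\<Prod>b\<leftarrow>a # xs. [:- b, 1:]) = proots ([:- a, 1:] * (\<Prod>b\<leftarrow>xs. [:- b, 1:]))"
    by simp
  also have "\<dots> = proots [:- a, 1:] + proots (\<Prod>b\<leftarrow>xs. [:- b, 1:])"
    by (rule proots_mult) auto
  finally show ?case using Cons.IH by simp
qed simp

lemma prod_linear_factors_mset_cong:
  "mset xs = mset ys \<Longrightarrow> (\<Prod>a\<leftarrow>xs. [:- a, 1:]) = (\<Prod>a\<leftarrow>ys. [:- a, 1:] :: 'a :: comm_ring_1 poly)"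
  by (metis mset_map prod_mset_prod_list)

lemma poly_prod_linear_factors_eq_0_iff:
  "poly (\<Prod>a\<leftarrow>xs. [:- a, 1:]) x = 0 \<longleftrightarrow> x \<in> set (xs :: 'a :: idom list)"
  by (induction xs) auto

lemma eigenvalues_desc_eqI:
  assumes A: "A \<in> carrier_mat n n" and cp: "char_poly A = (\<Prod>a\<leftarrow>xs. [:- a, 1:])"
    and len: "length xs = n"
  shows "eigenvalues_desc A = rev (sort xs)"
  unfolding eigenvalues_desc_def
proof (rule the_equality)
  show "length (rev (sort xs)) = dim_row A \<and> sorted_wrt (\<ge>) (rev (sort xs)) \<and>
      char_poly A = (\<Prod>a\<leftarrow>rev (sort xs). [:- a, 1:])"
    using A len cp prod_linear_factors_mset_cong[of "rev (sort xs)" xs]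
    by (simp add: sorted_wrt_rev)
next
  fix es assume es: "length es = dim_row A \<and> sorted_wrt (\<ge>) es \<and> char_poly A = (\<Prod>a\<leftarrow>es. [:- a, 1:])"
  then have "mset (rev es) = mset xs"
    using cp proots_prod_linear_factors[of es] proots_prod_linear_factors[of xs] by simp
  moreover have "sorted (rev es)" using es by (simp add: sorted_wrt_rev)
  ultimately have "sort xs = rev es" by (rule properties_for_sort)
  then show "es = rev (sort xs)" by simp
qed

lemma char_poly_real_linear_factors:
  fixes B :: "real mat"
  assumes B: "B \<in> carrier_mat m m"
    and roots: "\<And>e. poly (char_poly (map_mat complex_of_real B)) e = 0 \<Longrightarrow> Im e = 0 \<and> P (Re e)"
  shows "\<exists>\<rho>s. char_poly B = (\<Prod>\<rho>\<leftarrow>\<rho>s. [:- \<rho>, 1:]) \<and> length \<rho>s = m \<and> (\<forall>\<rho>\<in>set \<rho>s. P \<rho>)"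
proof -
  obtain as where fac: "char_poly (map_mat complex_of_real B) = (\<Prod>a\<leftarrow>as. [:- a, 1:])"
    and len: "length as = m"
    using char_poly_factorized[of "map_mat complex_of_real B" m] B by auto
  have as_real: "Im a = 0 \<and> P (Re a)" if "a \<in> set as" for a
    using roots that unfolding fac poly_prod_linear_factors_eq_0_iff by blast
  define \<rho>s where "\<rho>s = map Re as"
  interpret h: map_poly_inj_comm_ring_hom complex_of_real ..
  have "map_poly complex_of_real (\<Prod>\<rho>\<leftarrow>\<rho>s. [:- \<rho>, 1:]) = (\<Prod>a\<leftarrow>as. [:- a, 1:])"
    unfolding \<rho>s_def using as_real
    by (simp add: h.hom_prod_list o_def, intro arg_cong[where f = prod_list] map_cong)
       (auto simp: complex_eq_iff)
  also have "\<dots> = map_poly complex_of_real (char_poly B)"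
    unfolding fac[symmetric] by (rule of_real_hom.char_poly_hom[OF B])
  finally have "(\<Prod>\<rho>\<leftarrow>\<rho>s. [:- \<rho>, 1:]) = char_poly B" by (simp only: h.eq_iff)
  then show ?thesis using len as_real by (intro exI[of _ \<rho>s]) (auto simp: \<rho>s_def)
qed

section \<open>Deflation by the constant vector\<close>

lemma sum_split_first:
  fixes n :: nat assumes "0 < n" shows "(\<Sum>m = 0..<n. f m) = f 0 + (\<Sum>m = 1..<n. f m)"
  using sum.atLeast_Suc_lessThan[OF assms, of f] by simp

lemma sum_atLeast1_lessThan_eq:
  fixes f :: "nat \<Rightarrow> 'a :: ab_group_add"
  assumes "0 < n" shows "(\<Sum>l = 1..<n. f l) = (\<Sum>l<n. f l) - f 0"
  using sum_split_first[OF assms, of f] by (simp add: atLeast0LessThan)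

text \<open>For a matrix with constant column sums, this is the matrix of A on the vectors with
  coordinate sum zero, in the basis e_(j+1) - e_0; the columns of \<open>sum_zero_basis\<close> are the constant
  vector followed by this basis.\<close>

definition deflate :: "'a :: ring mat \<Rightarrow> 'a mat" where
  "deflate A = mat (dim_row A - 1) (dim_row A - 1) (\<lambda>(i, j). A $$ (Suc i, Suc j) - A $$ (Suc i, 0))"

definition sum_zero_basis :: "nat \<Rightarrow> 'a :: field_char_0 mat" where
  "sum_zero_basis n = mat n n (\<lambda>(i, j).
    if j = 0 then 1 else (if i = j then 1 else 0) - (if i = 0 then 1 else 0))"

definition sum_zero_basis_inv :: "nat \<Rightarrow> 'a :: field_char_0 mat" where
  "sum_zero_basis_inv n = mat n n (\<lambda>(i, j).
    if i = 0 then 1 / of_nat n else (if i = j then 1 else 0) - 1 / of_nat n)"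

lemma index_mult_sum_zero_basis:
  assumes A: "A \<in> carrier_mat n n" and i: "i < n" and j: "j < n"
  shows "(A * sum_zero_basis n) $$ (i, j) =
    (if j = 0 then (\<Sum>l<n. A $$ (i, l)) else A $$ (i, j) - A $$ (i, 0))"
proof -
  have "(A * sum_zero_basis n) $$ (i, j) = (\<Sum>l<n. A $$ (i, l) * sum_zero_basis n $$ (l, j))"
    using A i j by (simp add: sum_zero_basis_def scalar_prod_def atLeast0LessThan)
  also have "\<dots> = (\<Sum>l<n. if j = 0 then A $$ (i, l)
      else (if l = j then A $$ (i, l) else 0) - (if l = 0 then A $$ (i, l) else 0))"
    using i j by (intro sum.cong) (auto simp: sum_zero_basis_def)
  finally show ?thesis using j by (simp add: sum_subtractf)
qed

lemma index_sum_zero_basis_mult: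
  assumes B: "B \<in> carrier_mat n n" and i: "i < n" and j: "j < n"
  shows "(sum_zero_basis n * B) $$ (i, j) =
    B $$ (0, j) + (if i = 0 then - (\<Sum>l = 1..<n. B $$ (l, j)) else B $$ (i, j))"
proof -
  have "(sum_zero_basis n * B) $$ (i, j) = (\<Sum>l = 0..<n. sum_zero_basis n $$ (i, l) * B $$ (l, j))"
    using B i j by (simp add: sum_zero_basis_def scalar_prod_def)
  also have "\<dots> = B $$ (0, j) + (\<Sum>l = 1..<n. ((if i = l then 1 else 0) - (if i = 0 then 1 else 0)) * B $$ (l, j))"
    using i by (simp add: sum_split_first sum_zero_basis_def)
  also have "(\<Sum>l = 1..<n. ((if i = l then 1 else 0) - (if i = 0 then 1 else 0)) * B $$ (l, j)) =
      (if i = 0 then - (\<Sum>l = 1..<n. B $$ (l, j)) else B $$ (i, j))"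
  proof (cases "i = 0")
    case True
    then have "(\<Sum>l = 1..<n. ((if i = l then 1 else 0) - (if i = 0 then 1 else 0)) * B $$ (l, j)) =
        (\<Sum>l = 1..<n. - B $$ (l, j))" by (intro sum.cong) auto
    then show ?thesis using True by (simp add: sum_negf)
  next
    case False
    then have "(\<Sum>l = 1..<n. ((if i = l then 1 else 0) - (if i = 0 then 1 else 0)) * B $$ (l, j)) =
        (\<Sum>l = 1..<n. if i = l then B $$ (l, j) else 0)" by (intro sum.cong) auto
    then show ?thesis using False i by (simp add: sum.delta)
  qed
  finally show ?thesis .
qed

lemma sum_zero_basis_inverse:
  assumes n: "0 < n"
  shows "sum_zero_basis n * sum_zero_basis_inv n = (1\<^sub>m n :: 'a :: field_char_0 mat)"
proof (rule eq_matI)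
  let ?W' = "sum_zero_basis_inv n :: 'a mat"
  fix i j assume "i < dim_row (1\<^sub>m n :: 'a mat)" "j < dim_col (1\<^sub>m n :: 'a mat)"
  then have i: "i < n" and j: "j < n" by auto
  have "(\<Sum>l = 1..<n. ?W' $$ (l, j)) = (\<Sum>l = 1..<n. (if l = j then 1 else 0) - 1 / of_nat n)"
    using j by (intro sum.cong) (auto simp: sum_zero_basis_inv_def)
  also have "\<dots> = (if j = 0 then 0 else 1) - of_nat (n - 1) / of_nat n"
    using j by (simp add: sum_subtractf)
  finally have col_sum: "(\<Sum>l = 1..<n. ?W' $$ (l, j)) = (if j = 0 then 0 else 1) - of_nat (n - 1) / of_nat n" .
  have W': "?W' \<in> carrier_mat n n" by (simp add: sum_zero_basis_inv_def)
  show "(sum_zero_basis n * ?W') $$ (i, j) = 1\<^sub>m n $$ (i, j)"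
    unfolding index_sum_zero_basis_mult[OF W' i j] col_sum
    using i j n by (simp add: sum_zero_basis_inv_def field_simps of_nat_diff)
qed (auto simp: sum_zero_basis_def sum_zero_basis_inv_def)

lemma mult_sum_zero_basis:
  fixes A :: "'a :: field_char_0 mat"
  assumes A: "A \<in> carrier_mat n n" and n: "0 < n"
    and rows: "\<And>i. i < n \<Longrightarrow> (\<Sum>j<n. A $$ (i, j)) = k"
    and cols: "\<And>j. j < n \<Longrightarrow> (\<Sum>i<n. A $$ (i, j)) = k"
  shows "A * sum_zero_basis n = sum_zero_basis n *
    four_block_mat (mat 1 1 (\<lambda>_. k)) (0\<^sub>m 1 (n - 1)) (0\<^sub>m (n - 1) 1) (deflate A)"
    (is "_ = _ * ?B")
proof (rule eq_matI)
  have B: "?B \<in> carrier_mat n n" using A n by (auto simp: deflate_def)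
  have B_index: "?B $$ (l, j) = (if l = 0 \<and> j = 0 then k else if l = 0 \<or> j = 0 then 0
      else A $$ (l, j) - A $$ (l, 0))" if "l < n" "j < n" for l j
    using A n that by (cases l; cases j) (auto simp: deflate_def)
  fix i j assume "i < dim_row (sum_zero_basis n * ?B)" "j < dim_col (sum_zero_basis n * ?B)"
  then have i: "i < n" and j: "j < n" using B by (auto simp: sum_zero_basis_def)
  have col_sums: "(\<Sum>l = 1..<n. A $$ (l, j')) = k - A $$ (0, j')" if "j' < n" for j'
    unfolding sum_atLeast1_lessThan_eq[OF n] using cols[OF that] by simp
  have B_col_sum: "(\<Sum>l = 1..<n. ?B $$ (l, j)) =
      (\<Sum>l = 1..<n. if j = 0 then 0 else A $$ (l, j) - A $$ (l, 0))"
    using j by (intro sum.cong refl) (subst B_index, auto)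
  show "(A * sum_zero_basis n) $$ (i, j) = (sum_zero_basis n * ?B) $$ (i, j)"
    unfolding index_mult_sum_zero_basis[OF A i j] index_sum_zero_basis_mult[OF B i j]
      B_index[OF n j] B_index[OF i j] B_col_sum
    using rows[OF i] col_sums[OF j] col_sums[OF n] by (simp add: sum_subtractf)
qed (use A n in \<open>auto simp: sum_zero_basis_def deflate_def\<close>)

lemma char_poly_deflate:
  fixes A :: "'a :: field_char_0 mat"
  assumes A: "A \<in> carrier_mat n n" and n: "0 < n"
    and rows: "\<And>i. i < n \<Longrightarrow> (\<Sum>j<n. A $$ (i, j)) = k"
    and cols: "\<And>j. j < n \<Longrightarrow> (\<Sum>i<n. A $$ (i, j)) = k"
  shows "char_poly A = [:- k, 1:] * char_poly (deflate A)"
proof -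
  let ?W = "sum_zero_basis n :: 'a mat" and ?W' = "sum_zero_basis_inv n :: 'a mat"
  let ?B = "four_block_mat (mat 1 1 (\<lambda>_. k)) (0\<^sub>m 1 (n - 1)) (0\<^sub>m (n - 1) 1) (deflate A)"
  have W: "?W \<in> carrier_mat n n" and W': "?W' \<in> carrier_mat n n"
    by (auto simp: sum_zero_basis_def sum_zero_basis_inv_def)
  have B: "?B \<in> carrier_mat n n" using A n by (auto simp: deflate_def)
  have WW': "?W * ?W' = 1\<^sub>m n" by (rule sum_zero_basis_inverse[OF n])
  have W'W: "?W' * ?W = 1\<^sub>m n" by (rule mat_mult_left_right_inverse[OF W W' WW'])
  have "A = A * (?W * ?W')" using A by (simp add: WW')
  also have "\<dots> = ?W * ?B * ?W'"
    using A W W' by (simp add: assoc_mult_mat[symmetric] mult_sum_zero_basis[OF A n rows cols])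
  finally have "similar_mat A ?B"
    unfolding similar_mat_def similar_mat_wit_def using A W W' B WW' W'W
    by (intro exI[of _ ?W] exI[of _ ?W']) (auto simp: Let_def)
  then have "char_poly A = char_poly ?B" by (rule char_poly_similar)
  also have "\<dots> = char_poly (mat 1 1 (\<lambda>_. k)) * char_poly (deflate A)"
    by (rule char_poly_four_block_zeros_col) (use A in \<open>auto simp: deflate_def\<close>)
  also have "char_poly (mat 1 1 (\<lambda>_. k)) = [:- k, 1:]"
    by (simp add: char_poly_defs det_def sign_def)
  finally show ?thesis .
qed

lemma (in ring_hom) deflate_map_mat:
  "A \<in> carrier_mat n n \<Longrightarrow> deflate (map_mat hom A) = map_mat hom (deflate A)"
  by (intro eq_matI) (auto simp: deflate_def hom_minus)

definition sum_zero_lift :: "nat \<Rightarrow> 'a :: ab_group_add vec \<Rightarrow> 'a vec" where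
  "sum_zero_lift n z = vec n (\<lambda>l. if l = 0 then - (\<Sum>j<n - 1. z $ j) else z $ (l - 1))"

lemma sum_sum_zero_lift: "0 < n \<Longrightarrow> (\<Sum>l<n. sum_zero_lift n z $ l) = 0"
  by (cases n) (simp_all add: sum_zero_lift_def sum.lessThan_Suc_shift del: sum.lessThan_Suc)

lemma sum_zero_lift_eq_0_iff:
  "z \<in> carrier_vec (n - 1) \<Longrightarrow> sum_zero_lift n z = 0\<^sub>v n \<longleftrightarrow> z = 0\<^sub>v (n - 1)"
  by (auto simp: sum_zero_lift_def vec_eq_iff less_diff_conv)

lemma index_mult_sum_zero_lift:
  fixes A :: "'a :: comm_ring mat"
  assumes A: "A \<in> carrier_mat n n" and z: "z \<in> carrier_vec (n - 1)" and i: "Suc i < n"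
  shows "(A *\<^sub>v sum_zero_lift n z) $ Suc i = (deflate A *\<^sub>v z) $ i"
proof -
  obtain m where nm: "n = Suc m" using i by (cases n) auto
  have "(A *\<^sub>v sum_zero_lift n z) $ Suc i = (\<Sum>w<Suc m. A $$ (Suc i, w) * sum_zero_lift n z $ w)"
    using A i nm by (simp add: sum_zero_lift_def scalar_prod_def atLeast0LessThan)
  also have "\<dots> = A $$ (Suc i, 0) * (- (\<Sum>j<m. z $ j)) + (\<Sum>j<m. A $$ (Suc i, Suc j) * z $ j)"
    by (subst sum.lessThan_Suc_shift) (simp add: sum_zero_lift_def nm)
  also have "\<dots> = (\<Sum>j<m. deflate A $$ (i, j) * z $ j)"
    using A i nm by (simp add: deflate_def left_diff_distrib sum_subtractf sum_distrib_left)
  also have "\<dots> = (deflate A *\<^sub>v z) $ i"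
    using A z i nm by (simp add: deflate_def scalar_prod_def atLeast0LessThan)
  finally show ?thesis .
qed

lemma eigenvalue_deflate_imp_sum_zero_eigenvector:
  fixes A :: "'a :: field mat"
  assumes A: "A \<in> carrier_mat n n"
    and cols: "\<And>j. j < n \<Longrightarrow> (\<Sum>i<n. A $$ (i, j)) = k"
    and ev: "eigenvalue (deflate A) e"
  shows "\<exists>v. eigenvector A v e \<and> (\<Sum>i<n. v $ i) = 0"
proof -
  have D: "deflate A \<in> carrier_mat (n - 1) (n - 1)" using A by (simp add: deflate_def)
  obtain z where "eigenvector (deflate A) z e" using ev unfolding eigenvalue_def by blast
  then have z: "z \<in> carrier_vec (n - 1)" and z0: "z \<noteq> 0\<^sub>v (n - 1)"
    and Dz: "deflate A *\<^sub>v z = e \<cdot>\<^sub>v z"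
    using D unfolding eigenvector_def by auto
  then obtain m where nm: "n = Suc m" by (cases n) (auto intro: eq_vecI)
  define v where "v = sum_zero_lift n z"
  have v: "v \<in> carrier_vec n" and vsum: "(\<Sum>l<n. v $ l) = 0" and v0: "v \<noteq> 0\<^sub>v n"
    using z z0 nm sum_sum_zero_lift[of n z] sum_zero_lift_eq_0_iff[OF z] by (auto simp: v_def sum_zero_lift_def)
  have Av_Suc: "(A *\<^sub>v v) $ Suc i = e * v $ Suc i" if "i < m" for i
    using index_mult_sum_zero_lift[OF A z] Dz z that nm by (simp add: v_def sum_zero_lift_def)
  text \<open>The column sums make the coordinates of A v sum to k times those of v, that is, to zero.\<close>
  have "(\<Sum>l<n. (A *\<^sub>v v) $ l) = (\<Sum>w<n. (\<Sum>l<n. A $$ (l, w)) * v $ w)"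
    using A v by (simp add: scalar_prod_def atLeast0LessThan sum_distrib_right) (rule sum.swap)
  also have "\<dots> = 0" using vsum by (simp add: cols sum_distrib_left[symmetric])
  finally have "(A *\<^sub>v v) $ 0 = - (\<Sum>i<m. (A *\<^sub>v v) $ Suc i)"
    unfolding nm sum.lessThan_Suc_shift by (simp add: eq_neg_iff_add_eq_0)
  also have "\<dots> = e * v $ 0"
  proof -
    have "v $ 0 = - (\<Sum>i<m. v $ Suc i)"
      using vsum unfolding nm sum.lessThan_Suc_shift by (simp add: eq_neg_iff_add_eq_0)
    then show ?thesis using Av_Suc by (simp add: sum_distrib_left[symmetric])
  qed
  finally have Av_0: "(A *\<^sub>v v) $ 0 = e * v $ 0" .
  have "A *\<^sub>v v = e \<cdot>\<^sub>v v"
    using A v Av_0 Av_Suc nm by (intro eq_vecI) (auto simp: less_Suc_eq_0_disj)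
  then show ?thesis using A v v0 vsum unfolding eigenvector_def by blast
qed

lemma hermitian_form_real_symmetric:
  fixes A :: "real mat" and v :: "nat \<Rightarrow> complex"
  assumes sym: "\<And>i j. i < n \<Longrightarrow> j < n \<Longrightarrow> A $$ (i, j) = A $$ (j, i)"
  shows "(\<Sum>u<n. \<Sum>w<n. of_real (A $$ (u, w)) * cnj (v u) * v w) =
    of_real ((\<Sum>u<n. \<Sum>w<n. A $$ (u, w) * Re (v u) * Re (v w))
      + (\<Sum>u<n. \<Sum>w<n. A $$ (u, w) * Im (v u) * Im (v w)))"
proof (rule complex_eqI)
  have "Im (\<Sum>u<n. \<Sum>w<n. of_real (A $$ (u, w)) * cnj (v u) * v w) =
      (\<Sum>u<n. \<Sum>w<n. A $$ (u, w) * Re (v u) * Im (v w)) - (\<Sum>u<n. \<Sum>w<n. A $$ (u, w) * Im (v u) * Re (v w))"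
    by (simp add: Im_sum sum_subtractf[symmetric] algebra_simps)
  also have "(\<Sum>u<n. \<Sum>w<n. A $$ (u, w) * Im (v u) * Re (v w)) = (\<Sum>u<n. \<Sum>w<n. A $$ (u, w) * Re (v u) * Im (v w))"
    by (subst sum.swap) (intro sum.cong refl, simp add: sym mult.commute mult.left_commute)
  finally show "Im (\<Sum>u<n. \<Sum>w<n. of_real (A $$ (u, w)) * cnj (v u) * v w) = Im (of_real
    ((\<Sum>u<n. \<Sum>w<n. A $$ (u, w) * Re (v u) * Re (v w)) + (\<Sum>u<n. \<Sum>w<n. A $$ (u, w) * Im (v u) * Im (v w))))"
    by simp
qed (simp add: Re_sum sum.distrib[symmetric] algebra_simps)

lemma sum_zero_eigenvalue_bound:
  fixes A :: "real mat"
  assumes A: "A \<in> carrier_mat n n"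
    and sym: "\<And>i j. i < n \<Longrightarrow> j < n \<Longrightarrow> A $$ (i, j) = A $$ (j, i)"
    and QF: "\<And>y. (\<Sum>u<n. y u) = 0 \<Longrightarrow> \<bar>\<Sum>u<n. \<Sum>w<n. A $$ (u, w) * y u * y w\<bar> \<le> \<mu> * (\<Sum>u<n. (y u)^2)"
    and v: "eigenvector (map_mat complex_of_real A) v e" and vsum: "(\<Sum>u<n. v $ u) = 0"
  shows "Im e = 0 \<and> \<bar>Re e\<bar> \<le> \<mu>"
proof -
  have vc: "v \<in> carrier_vec n" and v0: "v \<noteq> 0\<^sub>v n"
    and Av: "map_mat complex_of_real A *\<^sub>v v = e \<cdot>\<^sub>v v"
    using v A unfolding eigenvector_def by auto
  define p where "p u = Re (v $ u)" for u
  define q where "q u = Im (v $ u)" for u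
  define N where "N = (\<Sum>u<n. (p u)^2 + (q u)^2)"
  have Av_index: "(\<Sum>w<n. of_real (A $$ (u, w)) * v $ w) = e * v $ u" if "u < n" for u
  proof -
    have "(map_mat complex_of_real A *\<^sub>v v) $ u = (\<Sum>w<n. of_real (A $$ (u, w)) * v $ w)"
      using A vc that by (simp add: scalar_prod_def atLeast0LessThan)
    then show ?thesis using Av vc that by simp
  qed
  have "e * of_real N = (\<Sum>u<n. e * (v $ u * cnj (v $ u)))"
    by (simp add: sum_distrib_left[symmetric] complex_norm_square[symmetric] N_def p_def q_def cmod_power2)
  also have "\<dots> = (\<Sum>u<n. cnj (v $ u) * (\<Sum>w<n. of_real (A $$ (u, w)) * v $ w))"
    by (intro sum.cong) (auto simp: Av_index)
  also have "\<dots> = (\<Sum>u<n. \<Sum>w<n. of_real (A $$ (u, w)) * cnj (v $ u) * v $ w)"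
    by (simp add: sum_distrib_left algebra_simps)
  also have "\<dots> = of_real ((\<Sum>u<n. \<Sum>w<n. A $$ (u, w) * p u * p w) + (\<Sum>u<n. \<Sum>w<n. A $$ (u, w) * q u * q w))"
    unfolding p_def q_def by (rule hermitian_form_real_symmetric[OF sym])
  finally have eN: "e * of_real N = \<dots>" .
  have "(\<Sum>u<n. p u) = 0" "(\<Sum>u<n. q u) = 0"
    using arg_cong[OF vsum, of Re] arg_cong[OF vsum, of Im] by (simp_all add: Re_sum Im_sum p_def q_def)
  from QF[OF this(1)] QF[OF this(2)] have "\<bar>Re e * N\<bar> \<le> \<mu> * N"
    using arg_cong[OF eN, of Re] by (simp add: N_def sum.distrib algebra_simps)
  moreover have "N > 0"
  proof -
    obtain j where j: "j < n" "v $ j \<noteq> 0" using v0 vc by (metis eq_vecI index_zero_vec carrier_vecD)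
    then have "(p j)^2 + (q j)^2 > 0" by (simp add: p_def q_def complex_eq_iff sum_power2_gt_zero_iff)
    then show ?thesis unfolding N_def using j by (intro sum_pos2[of _ j]) (auto intro: add_nonneg_nonneg)
  qed
  moreover have "Im e * N = 0" using arg_cong[OF eN, of Im] by simp
  ultimately show ?thesis by (simp add: abs_mult)
qed

lemma zero_weight_spectral_radius_le_of_char_poly:
  fixes A :: "real mat"
  assumes A: "A \<in> carrier_mat n n" and n: "2 \<le> n"
    and cp: "char_poly A = [:- k, 1:] * (\<Prod>\<rho>\<leftarrow>\<rho>s. [:- \<rho>, 1:])" and len: "length \<rho>s = n - 1"
    and \<rho>_le: "\<forall>\<rho>\<in>set \<rho>s. \<bar>\<rho>\<bar> \<le> \<mu>" and \<mu>k: "\<mu> < k"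
  shows "zero_weight_spectral_radius A \<le> \<mu>"
proof -
  have "char_poly A = (\<Prod>\<rho>\<leftarrow>k # \<rho>s. [:- \<rho>, 1:])" using cp by simp
  then have "eigenvalues_desc A = rev (sort (k # \<rho>s))"
    by (rule eigenvalues_desc_eqI[OF A]) (use len n in simp)
  also have "sort (k # \<rho>s) = sort \<rho>s @ [k]"
    using \<rho>_le \<mu>k by (intro properties_for_sort) (auto simp: sorted_append)
  finally have ev: "eigenvalues_desc A = k # rev (sort \<rho>s)" by simp
  have "\<bar>eigenvalues_desc A ! i\<bar> \<le> \<mu>" if i: "i \<in> {1..<n}" for i
  proof -
    have "eigenvalues_desc A ! i = rev (sort \<rho>s) ! (i - 1)" using i unfolding ev by (cases i) auto
    moreover have "i - 1 < length (rev (sort \<rho>s))" using i len by auto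
    ultimately have "eigenvalues_desc A ! i \<in> set \<rho>s" by (metis nth_mem set_rev set_sort)
    then show ?thesis using \<rho>_le by blast
  qed
  then show ?thesis unfolding zero_weight_spectral_radius_def using A n by (subst Max_le_iff) auto
qed

lemma zero_weight_spectral_radius_le:
  fixes A :: "real mat"
  assumes A: "A \<in> carrier_mat n n" and n: "2 \<le> n"
    and sym: "\<And>i j. i < n \<Longrightarrow> j < n \<Longrightarrow> A $$ (i, j) = A $$ (j, i)"
    and rows: "\<And>i. i < n \<Longrightarrow> (\<Sum>j<n. A $$ (i, j)) = k"
    and QF: "\<And>y. (\<Sum>u<n. y u) = 0 \<Longrightarrow> \<bar>\<Sum>u<n. \<Sum>w<n. A $$ (u, w) * y u * y w\<bar> \<le> \<mu> * (\<Sum>u<n. (y u)^2)"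
    and \<mu>k: "\<mu> < k"
  shows "zero_weight_spectral_radius A \<le> \<mu>"
proof -
  let ?Ac = "map_mat complex_of_real A"
  have cols: "(\<Sum>i<n. A $$ (i, j)) = k" if "j < n" for j
    using rows[OF that] sym that by (metis (no_types, lifting) lessThan_iff sum.cong)
  have cols_c: "(\<Sum>i<n. ?Ac $$ (i, j)) = complex_of_real k" if "j < n" for j
    using cols[OF that] A that by (simp flip: of_real_sum)
  have D: "deflate A \<in> carrier_mat (n - 1) (n - 1)" using A by (simp add: deflate_def)
  have "\<exists>\<rho>s. char_poly (deflate A) = (\<Prod>\<rho>\<leftarrow>\<rho>s. [:- \<rho>, 1:]) \<and> length \<rho>s = n - 1 \<and> (\<forall>\<rho>\<in>set \<rho>s. \<bar>\<rho>\<bar> \<le> \<mu>)"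
  proof (rule char_poly_real_linear_factors[OF D])
    fix e assume "poly (char_poly (map_mat complex_of_real (deflate A))) e = 0"
    then have "eigenvalue (map_mat complex_of_real (deflate A)) e"
      using eigenvalue_root_char_poly[of "map_mat complex_of_real (deflate A)" "n - 1"] D by simp
    then have "eigenvalue (deflate ?Ac) e" by (simp add: of_real_hom.deflate_map_mat[OF A])
    moreover have "?Ac \<in> carrier_mat n n" using A by simp
    ultimately obtain v where "eigenvector ?Ac v e" "(\<Sum>i<n. v $ i) = 0"
      using eigenvalue_deflate_imp_sum_zero_eigenvector[OF _ cols_c] by blast
    with A sym QF show "Im e = 0 \<and> \<bar>Re e\<bar> \<le> \<mu>" by (rule sum_zero_eigenvalue_bound)
  qed
  then obtain \<rho>s where "char_poly (deflate A) = (\<Prod>\<rho>\<leftarrow>\<rho>s. [:- \<rho>, 1:])"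
    and "length \<rho>s = n - 1" "\<forall>\<rho>\<in>set \<rho>s. \<bar>\<rho>\<bar> \<le> \<mu>" by blast
  with char_poly_deflate[OF A _ rows cols] n \<mu>k show ?thesis
    by (intro zero_weight_spectral_radius_le_of_char_poly[OF A n]) auto
qed

lemma sum_if_const:
  "(\<Sum>x<(n :: nat). if P x then c else 0) = of_nat (card {x. x < n \<and> P x}) * (c :: 'a :: comm_semiring_1)"
proof -
  have "(\<Sum>x<n. if P x then c else 0) = sum (\<lambda>_. c) {x \<in> {..<n}. P x}"
    by (rule sum.inter_filter[symmetric]) simp
  also have "{x \<in> {..<n}. P x} = {x. x < n \<and> P x}" by auto
  finally show ?thesis by (simp only: sum_constant)
qed

lemma sum_card_swap:
  "(\<Sum>x<n. card {y. y < n \<and> P x y}) = (\<Sum>y<n. card {x. x < (n :: nat) \<and> P x y})"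
proof -
  have "(\<Sum>x<n. card {y. y < n \<and> P x y}) = (\<Sum>x<n. \<Sum>y<n. if P x y then 1 else (0::nat))"
    by (simp add: sum_if_const)
  also have "\<dots> = (\<Sum>y<n. \<Sum>x<n. if P x y then 1 else (0::nat))" by (rule sum.swap)
  also have "\<dots> = (\<Sum>y<n. card {x. x < n \<and> P x y})" by (simp add: sum_if_const)
  finally show ?thesis .
qed

lemma sum_if_by_level:
  fixes n D :: nat
  assumes "\<And>x. x < n \<Longrightarrow> P x \<Longrightarrow> h x \<le> D"
  shows "(\<Sum>x<n. if P x then g (h x) else 0) =
    (\<Sum>j\<le>D. of_nat (card {x. x < n \<and> P x \<and> h x = j}) * (g j :: 'a :: comm_semiring_1))"
proof -
  define S where "S = {x. x < n \<and> P x}"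
  have "(\<Sum>x<n. if P x then g (h x) else 0) = (\<Sum>x\<in>S. g (h x))"
    unfolding S_def by (simp add: sum.inter_filter[symmetric] Collect_conj_eq lessThan_def)
  also have "\<dots> = (\<Sum>j\<le>D. \<Sum>x\<in>{x\<in>S. h x = j}. g (h x))"
    by (rule sum.group[symmetric]) (use assms in \<open>auto simp: S_def\<close>)
  also have "\<dots> = (\<Sum>j\<le>D. of_nat (card {x. x < n \<and> P x \<and> h x = j}) * g j)"
  proof (intro sum.cong refl)
    fix j
    have "(\<Sum>x\<in>{x\<in>S. h x = j}. g (h x)) = (\<Sum>x\<in>{x\<in>S. h x = j}. g j)" by (intro sum.cong) auto
    moreover have "{x\<in>S. h x = j} = {x. x < n \<and> P x \<and> h x = j}" by (auto simp: S_def)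
    ultimately show "(\<Sum>x\<in>{x\<in>S. h x = j}. g (h x)) = of_nat (card {x. x < n \<and> P x \<and> h x = j}) * g j"
      by simp
  qed
  finally show ?thesis .
qed

lemma sum_pairs_square_diff:
  fixes f :: "nat \<Rightarrow> real"
  assumes sum0: "(\<Sum>u<n. f u) = 0" and \<sigma>: "\<sigma>^2 = 1"
  shows "(\<Sum>u<n. \<Sum>w<n. (f u - \<sigma> * f w)^2) = 2 * n * (\<Sum>u<n. (f u)^2)"
proof -
  have "(f u - \<sigma> * f w)^2 = (f u)^2 + (f w)^2 - 2 * \<sigma> * (f u * f w)" for u w
    by (simp add: power2_diff power_mult_distrib \<sigma> algebra_simps)
  then have "(\<Sum>u<n. \<Sum>w<n. (f u - \<sigma> * f w)^2) =
      (\<Sum>u<n. \<Sum>w<n. (f u)^2) + (\<Sum>u<n. \<Sum>w<n. (f w)^2) - 2 * \<sigma> * (\<Sum>u<n. \<Sum>w<n. f u * f w)"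
    by (simp only: sum.distrib sum_subtractf sum_distrib_left)
  also have "(\<Sum>u<n. \<Sum>w<n. f u * f w) = 0"
    using sum0 by (simp add: sum_distrib_left[symmetric])
  finally show ?thesis by (simp add: sum_distrib_left[symmetric])
qed

lemma square_add_le_weighted:
  fixes p q \<sigma> x :: real
  assumes "\<sigma>^2 = 1"
  shows "x * (p + \<sigma> * q)^2 \<le> (x + 1) * p^2 + x * (x + 1) * q^2"
proof -
  have "(x + 1) * p^2 + x * (x + 1) * q^2 - x * (p + \<sigma> * q)^2
      = (p - x * \<sigma> * q)^2 + (x^2 + x) * q^2 * (1 - \<sigma>^2)"
    by (simp add: power2_eq_square algebra_simps)
  then have "(x + 1) * p^2 + x * (x + 1) * q^2 - x * (p + \<sigma> * q)^2 = (p - x * \<sigma> * q)^2"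
    using assms by simp
  then show ?thesis using zero_le_power2[of "p - x * \<sigma> * q"] by linarith
qed

lemma k_dist_le: "k_dist n E x t \<le> n"
  unfolding k_dist_def by (rule order.trans[OF card_mono[of "{..<n}"]]) auto

section \<open>Graph distances\<close>

locale connected_graph =
  fixes n :: nat and E :: "nat \<Rightarrow> nat \<Rightarrow> bool"
  assumes simple: "simple_graph n E" and connected: "graph_connected n E"
begin

abbreviation d :: "nat \<Rightarrow> nat \<Rightarrow> nat" where "d \<equiv> gdist n E"

lemma edge_vertices: "E u w \<Longrightarrow> u < n \<and> w < n"
  using simple unfolding simple_graph_def by blast

lemma edge_sym: "E u w \<Longrightarrow> E w u"
  using simple unfolding simple_graph_def by blast

lemma edge_irrefl: "\<not> E u u"
  using simple unfolding simple_graph_def by blast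

lemma has_walk_refl: "v < n \<Longrightarrow> has_walk n E 0 v v"
  unfolding has_walk_def by (intro exI[of _ "\<lambda>_. v"]) auto

lemma has_walk_0_imp_eq: "has_walk n E 0 v w \<Longrightarrow> v = w"
  unfolding has_walk_def by auto

lemma has_walk_snoc:
  assumes "has_walk n E m v w" "E w u" shows "has_walk n E (Suc m) v u"
proof -
  obtain f where f: "f 0 = v" "f m = w" "\<forall>i\<le>m. f i < n" "\<forall>i<m. E (f i) (f (Suc i))"
    using assms(1) unfolding has_walk_def by blast
  define g where "g i = (if i \<le> m then f i else u)" for i
  have "g 0 = v" "g (Suc m) = u" using f by (auto simp: g_def)
  moreover have "\<forall>i\<le>Suc m. g i < n" using f edge_vertices[OF assms(2)] by (auto simp: g_def le_Suc_eq)
  moreover have "\<forall>i<Suc m. E (g i) (g (Suc i))" using f assms(2) by (auto simp: g_def less_Suc_eq)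
  ultimately show ?thesis unfolding has_walk_def by blast
qed

lemma has_walk_rev:
  assumes "has_walk n E m v w" shows "has_walk n E m w v"
proof -
  obtain f where f: "f 0 = v" "f m = w" "\<forall>i\<le>m. f i < n" "\<forall>i<m. E (f i) (f (Suc i))"
    using assms(1) unfolding has_walk_def by blast
  define g where "g i = f (m - i)" for i
  have "g 0 = w" "g m = v" using f by (auto simp: g_def)
  moreover have "\<forall>i\<le>m. g i < n" using f by (auto simp: g_def)
  moreover have "E (g i) (g (Suc i))" if i: "i < m" for i
  proof -
    have "E (f (m - Suc i)) (f (Suc (m - Suc i)))" using f i by auto
    moreover have "Suc (m - Suc i) = m - i" using i by simp
    ultimately show ?thesis by (simp add: g_def edge_sym)
  qed
  ultimately show ?thesis unfolding has_walk_def by blast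
qed

lemma has_walk_SucE:
  assumes "has_walk n E (Suc m) v w"
  obtains w' where "has_walk n E m v w'" "E w' w"
proof -
  obtain f where f: "f 0 = v" "f (Suc m) = w" "\<forall>i\<le>Suc m. f i < n" "\<forall>i<Suc m. E (f i) (f (Suc i))"
    using assms(1) unfolding has_walk_def by blast
  have "has_walk n E m v (f m)" unfolding has_walk_def using f by (intro exI[of _ f]) auto
  moreover have "E (f m) w" using f by auto
  ultimately show ?thesis by (rule that)
qed

lemma has_walk_dist: "v < n \<Longrightarrow> w < n \<Longrightarrow> has_walk n E (d v w) v w"
  using connected unfolding graph_connected_def gdist_def by (metis LeastI)

lemma dist_le: "has_walk n E m v w \<Longrightarrow> d v w \<le> m"
  unfolding gdist_def by (rule Least_le)

lemma dist_eq_0_iff: "v < n \<Longrightarrow> w < n \<Longrightarrow> d v w = 0 \<longleftrightarrow> v = w"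
  using has_walk_dist[of v w] has_walk_0_imp_eq dist_le[OF has_walk_refl] by fastforce

lemma dist_commute: "v < n \<Longrightarrow> w < n \<Longrightarrow> d v w = d w v"
  by (meson antisym dist_le has_walk_dist has_walk_rev)

lemma dist_edge_le: "v < n \<Longrightarrow> E w u \<Longrightarrow> d v u \<le> Suc (d v w)"
  using dist_le[OF has_walk_snoc[OF has_walk_dist]] edge_vertices by blast

lemma dist_edge_le': "v < n \<Longrightarrow> E w u \<Longrightarrow> d v w \<le> Suc (d v u)"
  using dist_edge_le edge_sym by blast

lemma dist_eq_1_iff:
  assumes "u < n" "w < n" shows "d u w = 1 \<longleftrightarrow> E u w"
proof
  assume "d u w = 1"
  then have "has_walk n E (Suc 0) u w" using has_walk_dist[OF assms] by simp
  then show "E u w" by (auto elim: has_walk_SucE dest: has_walk_0_imp_eq)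
next
  assume e: "E u w"
  have "d u w \<le> 1" using dist_le[OF has_walk_snoc[OF has_walk_refl e]] assms by simp
  moreover have "d u w \<noteq> 0" using dist_eq_0_iff[OF assms] edge_irrefl e by auto
  ultimately show "d u w = 1" by simp
qed

lemma dist_SucE:
  assumes "v < n" "w < n" "d v w = Suc m"
  obtains w' where "E w' w" "d v w' = m"
proof -
  obtain w' where w': "has_walk n E m v w'" "E w' w"
    using has_walk_dist[OF assms(1,2)] assms(3) by (auto elim: has_walk_SucE)
  have "d v w' \<le> m" using dist_le[OF w'(1)] .
  moreover have "d v w \<le> Suc (d v w')" using dist_edge_le[OF assms(1) w'(2)] .
  ultimately show ?thesis using w' assms(3) that by simp
qed

lemma dist_le_diameter:
  assumes "v < n" "w < n" shows "d v w \<le> diameter n E"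
proof -
  have "{d v w | v w. v < n \<and> w < n} = (\<lambda>(v, w). d v w) ` ({..<n} \<times> {..<n})" by auto
  then have "finite {d v w | v w. v < n \<and> w < n}" by simp
  then show ?thesis unfolding diameter_def using assms by (intro Max_ge) auto
qed

end

section \<open>Distance-regular graphs\<close>

locale distance_regular_graph = connected_graph +
  fixes a b c :: "nat \<Rightarrow> nat"
  assumes intersection_numbers: "\<And>i v w. i \<le> diameter n E \<Longrightarrow> v < n \<Longrightarrow> w < n \<Longrightarrow>
    gdist n E v w = i \<Longrightarrow>
      card {u. u < n \<and> E w u \<and> Suc (gdist n E v u) = i} = c i \<and>
      card {u. u < n \<and> E w u \<and> gdist n E v u = i} = a i \<and>
      card {u. u < n \<and> E w u \<and> gdist n E v u = Suc i} = b i"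
begin

abbreviation D :: nat where "D \<equiv> diameter n E"

definition nbr_count :: "nat \<Rightarrow> nat \<Rightarrow> nat" where
  "nbr_count i j = (if Suc j = i then c i else if j = i then a i else if j = Suc i then b i else 0)"

lemma nbr_count_Suc_right [simp]: "nbr_count i (Suc i) = b i"
  by (simp add: nbr_count_def)

lemma nbr_count_Suc_left [simp]: "nbr_count (Suc i) i = c (Suc i)"
  by (simp add: nbr_count_def)

lemma card_nbrs_at_dist:
  assumes v: "v < n" and u: "u < n"
  shows "card {z. z < n \<and> E u z \<and> d v z = j} = nbr_count (d v u) j"
proof -
  define i where "i = d v u"
  note nums = intersection_numbers[OF dist_le_diameter[OF v u] v u, folded i_def]
  consider "Suc j = i" | "j = i" | "j = Suc i" | "Suc j \<noteq> i" "j \<noteq> i" "j \<noteq> Suc i" by blast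
  then show ?thesis
  proof cases
    case 1
    then have "{z. z < n \<and> E u z \<and> d v z = j} = {z. z < n \<and> E u z \<and> Suc (d v z) = i}" by auto
    then show ?thesis using nums 1 by (simp add: nbr_count_def i_def)
  next
    case 2
    then show ?thesis using nums by (simp add: nbr_count_def i_def)
  next
    case 3
    then show ?thesis using nums by (simp add: nbr_count_def i_def)
  next
    case 4
    have "{z. z < n \<and> E u z \<and> d v z = j} = {}"
      using dist_edge_le[OF v] dist_edge_le'[OF v] 4 unfolding i_def
      by (force simp: le_Suc_eq)
    then show ?thesis using 4 by (simp add: nbr_count_def i_def)
  qed
qed

lemma dist_ne_Suc_if_c_eq_0:
  assumes "c (Suc i) = 0" "Suc i \<le> D" "v < n" "w < n"
  shows "d v w \<noteq> Suc i"
proof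
  assume dvw: "d v w = Suc i"
  then obtain w' where w': "E w' w" "d v w' = i" using dist_SucE[OF assms(3,4)] by blast
  then have "w' \<in> {u. u < n \<and> E w u \<and> Suc (d v u) = Suc i}" using edge_sym edge_vertices by auto
  moreover have "card {u. u < n \<and> E w u \<and> Suc (d v u) = Suc i} = 0"
    using intersection_numbers[OF assms(2,3,4) dvw] assms(1) by simp
  ultimately show False by auto
qed

text \<open>Once \<open>pair_count_eq\<close> is proved, this is the intersection number p^h_ij with h = d x y.\<close>

definition pair_count :: "nat \<Rightarrow> nat \<Rightarrow> nat \<Rightarrow> nat \<Rightarrow> nat" where
  "pair_count x y i j = card {u. u < n \<and> d x u = i \<and> d y u = j}"

lemma pair_count_0:
  assumes "x < n" "y < n"
  shows "pair_count x y 0 j = (if d y x = j then 1 else 0)"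
proof -
  have "{u. u < n \<and> d x u = 0 \<and> d y u = j} = (if d y x = j then {x} else {})"
    using dist_eq_0_iff[OF assms(1)] assms by auto
  then show ?thesis unfolding pair_count_def by simp
qed

lemma pair_count_eq_0:
  "(\<And>u. u < n \<Longrightarrow> d x u \<noteq> i) \<Longrightarrow> pair_count x y i j = 0"
  unfolding pair_count_def by auto

lemma pair_count_double_count:
  assumes x: "x < n" and y: "y < n"
  shows "(\<Sum>j'\<le>D. pair_count x y i j' * nbr_count j' j) = (\<Sum>i'\<le>D. pair_count x y i' j * nbr_count i' i)"
proof -
  define P where "P u z = (d x u = i \<and> E u z \<and> d y z = j)" for u z
  have "(\<Sum>u<n. card {z. z < n \<and> P u z}) = (\<Sum>u<n. if d x u = i then nbr_count (d y u) j else 0)"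
    using card_nbrs_at_dist[OF y] by (intro sum.cong) (auto simp: P_def)
  also have "\<dots> = (\<Sum>j'\<le>D. pair_count x y i j' * nbr_count j' j)"
    by (subst sum_if_by_level[where D = D]) (auto simp: dist_le_diameter y pair_count_def)
  finally have L: "(\<Sum>u<n. card {z. z < n \<and> P u z}) = \<dots>" .
  have "(\<Sum>z<n. card {u. u < n \<and> P u z}) = (\<Sum>z<n. if d y z = j then nbr_count (d x z) i else 0)"
  proof (intro sum.cong refl)
    fix z assume z: "z \<in> {..<n}"
    have "{u. u < n \<and> P u z} = (if d y z = j then {u. u < n \<and> E z u \<and> d x u = i} else {})"
      by (auto simp: P_def dest: edge_sym)
    then show "card {u. u < n \<and> P u z} = (if d y z = j then nbr_count (d x z) i else 0)"
      using card_nbrs_at_dist[OF x, of z i] z by auto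
  qed
  also have "\<dots> = (\<Sum>i'\<le>D. card {z. z < n \<and> d y z = j \<and> d x z = i'} * nbr_count i' i)"
    by (subst sum_if_by_level[where D = D]) (auto simp: dist_le_diameter x)
  also have "\<dots> = (\<Sum>i'\<le>D. pair_count x y i' j * nbr_count i' i)"
    unfolding pair_count_def by (intro sum.cong refl arg_cong2[where f = "(*)"] arg_cong[where f = card]) auto
  finally have R: "(\<Sum>z<n. card {u. u < n \<and> P u z}) = \<dots>" .
  show ?thesis using L R sum_card_swap[of n P] by simp
qed

text \<open>By induction on i: in the double counting identity the term i' = i + 1 has the coefficient
  c (i + 1), and if that vanishes there are no vertices at distance i + 1 at all.\<close>

lemma pair_count_eq:
  assumes xy: "x < n" "y < n" "x' < n" "y' < n" and dd: "d x y = d x' y'"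
  shows "pair_count x y i j = pair_count x' y' i j"
proof (induction i arbitrary: j rule: less_induct)
  case (less i)
  show ?case
  proof (cases i)
    case 0
    then show ?thesis using pair_count_0 xy dd dist_commute by metis
  next
    case (Suc i0)
    have IH: "pair_count x y i' j' = pair_count x' y' i' j'" if "i' \<le> i0" for i' j'
      using less.IH[of i' j'] that Suc by simp
    show ?thesis
    proof (cases "Suc i0 \<le> D \<and> c (Suc i0) \<noteq> 0")
      case True
      let ?f = "\<lambda>x y i'. pair_count x y i' j * nbr_count i' i0"
      have sum_split: "(\<Sum>i'\<le>D. ?f x y i') = ?f x y (Suc i0) + (\<Sum>i'\<in>{..D} - {Suc i0}. ?f x y i')"
        for x y using True by (subst sum.remove[of _ "Suc i0"]) auto
      have "(\<Sum>i'\<le>D. ?f x y i') = (\<Sum>i'\<le>D. ?f x' y' i')"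
        using pair_count_double_count[OF xy(1,2), of i0 j] pair_count_double_count[OF xy(3,4), of i0 j] IH
        by simp
      moreover have "(\<Sum>i'\<in>{..D} - {Suc i0}. ?f x y i') = (\<Sum>i'\<in>{..D} - {Suc i0}. ?f x' y' i')"
        using IH by (intro sum.cong) (auto simp: nbr_count_def not_less_eq_eq)
      ultimately have "pair_count x y (Suc i0) j * c (Suc i0) = pair_count x' y' (Suc i0) j * c (Suc i0)"
        unfolding sum_split[of x y] sum_split[of x' y'] by simp
      then show ?thesis using True Suc by simp
    next
      case False
      have "d z u \<noteq> Suc i0" if "z < n" "u < n" for z u
        using False dist_le_diameter[OF that] dist_ne_Suc_if_c_eq_0[OF _ _ that] by fastforce
      then show ?thesis using Suc pair_count_eq_0 xy by metis
    qed
  qed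
qed

lemma k_dist_eq:
  assumes "x < n" "x' < n" shows "k_dist n E x i = k_dist n E x' i"
proof -
  have "d x x = d x' x'" using dist_eq_0_iff[of x x] dist_eq_0_iff[of x' x'] assms by simp
  then show ?thesis using pair_count_eq[of x x x' x' i i] assms unfolding pair_count_def k_dist_def by simp
qed

lemma pair_count_edge_eq: "E x y \<Longrightarrow> E x' y' \<Longrightarrow> pair_count x y i j = pair_count x' y' i j"
  using pair_count_eq edge_vertices dist_eq_1_iff by metis

lemma k_dist_mult_b:
  assumes x: "x < n"
  shows "k_dist n E x i * b i = k_dist n E x (Suc i) * c (Suc i)"
proof -
  define P where "P u w = (d x u = i \<and> E u w \<and> d x w = Suc i)" for u w
  have "(\<Sum>u<n. card {w. w < n \<and> P u w}) = (\<Sum>u<n. if d x u = i then b i else 0)"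
    using card_nbrs_at_dist[OF x, of _ "Suc i"] by (intro sum.cong) (auto simp: P_def)
  also have "\<dots> = k_dist n E x i * b i" by (simp add: sum_if_const k_dist_def)
  finally have L: "(\<Sum>u<n. card {w. w < n \<and> P u w}) = k_dist n E x i * b i" .
  have "(\<Sum>w<n. card {u. u < n \<and> P u w}) = (\<Sum>w<n. if d x w = Suc i then c (Suc i) else 0)"
  proof (intro sum.cong refl)
    fix w assume w: "w \<in> {..<n}"
    have "{u. u < n \<and> P u w} = (if d x w = Suc i then {u. u < n \<and> E w u \<and> d x u = i} else {})"
      by (auto simp: P_def dest: edge_sym)
    then show "card {u. u < n \<and> P u w} = (if d x w = Suc i then c (Suc i) else 0)"
      using card_nbrs_at_dist[OF x, of w i] w by auto
  qed
  also have "\<dots> = k_dist n E x (Suc i) * c (Suc i)" by (simp add: sum_if_const k_dist_def)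
  finally have R: "(\<Sum>w<n. card {u. u < n \<and> P u w}) = k_dist n E x (Suc i) * c (Suc i)" .
  show ?thesis using L R sum_card_swap[of n P] by simp
qed

lemma k_mult_pair_count_edge:
  assumes k: "k_regular n E k" and x: "x < n" and e: "E x y"
  shows "k * pair_count x y i (Suc i) = k_dist n E x i * b i"
proof -
  define P where "P z u = (E x z \<and> d x u = i \<and> d z u = Suc i)" for z u
  have "(\<Sum>z<n. card {u. u < n \<and> P z u}) = (\<Sum>z<n. if E x z then pair_count x y i (Suc i) else 0)"
    using pair_count_edge_eq[OF _ e] by (intro sum.cong) (auto simp: P_def pair_count_def)
  also have "\<dots> = k * pair_count x y i (Suc i)"
    using k x by (simp add: sum_if_const k_regular_def)
  finally have L: "(\<Sum>z<n. card {u. u < n \<and> P z u}) = k * pair_count x y i (Suc i)" .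
  have "(\<Sum>u<n. card {z. z < n \<and> P z u}) = (\<Sum>u<n. if d x u = i then b i else 0)"
  proof (intro sum.cong refl)
    fix u assume u: "u \<in> {..<n}"
    have "{z. z < n \<and> P z u} = (if d x u = i then {z. z < n \<and> E x z \<and> d u z = Suc i} else {})"
      using u dist_commute by (auto simp: P_def)
    moreover have "card {z. z < n \<and> E x z \<and> d u z = Suc i} = b i" if "d x u = i"
      using card_nbrs_at_dist[of u x "Suc i"] u x that dist_commute[OF x, of u] by simp
    ultimately show "card {z. z < n \<and> P z u} = (if d x u = i then b i else 0)" by auto
  qed
  also have "\<dots> = k_dist n E x i * b i" by (simp add: sum_if_const k_dist_def)
  finally have R: "(\<Sum>u<n. card {z. z < n \<and> P z u}) = k_dist n E x i * b i" .
  show ?thesis using L R sum_card_swap[of n P] by simp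
qed

lemma k_dist_1:
  assumes "k_regular n E k" "x < n" shows "k_dist n E x 1 = k"
proof -
  have "{u. u < n \<and> d x u = 1} = {u. u < n \<and> E x u}" using dist_eq_1_iff assms(2) by auto
  then show ?thesis using assms unfolding k_regular_def k_dist_def by simp
qed

section \<open>Distance energies\<close>

text \<open>For s = 1 and s = -1, \<open>dist_energy y s 1\<close> controls the largest and the smallest
  nontrivial eigenvalue, respectively.\<close>

definition dist_energy :: "(nat \<Rightarrow> real) \<Rightarrow> real \<Rightarrow> nat \<Rightarrow> real" where
  "dist_energy y s i = (\<Sum>u<n. \<Sum>w<n. if d u w = i then (y u - s ^ i * y w)^2 else 0)"

lemma dist_energy_nonneg: "0 \<le> dist_energy y s i"
  unfolding dist_energy_def by (intro sum_nonneg) auto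

lemma dist_energy_1: "dist_energy y s 1 = (\<Sum>u<n. \<Sum>w<n. if E u w then (y u - s * y w)^2 else 0)"
  unfolding dist_energy_def using dist_eq_1_iff by (intro sum.cong refl) auto

definition geodesic_step_sum :: "(nat \<Rightarrow> nat \<Rightarrow> nat \<Rightarrow> real) \<Rightarrow> nat \<Rightarrow> real" where
  "geodesic_step_sum X i =
    (\<Sum>u<n. \<Sum>w'<n. \<Sum>w<n. if d u w' = i \<and> E w' w \<and> d u w = Suc i then X u w' w else 0)"

lemma geodesic_step_sum_first:
  fixes f :: "nat \<Rightarrow> nat \<Rightarrow> real"
  shows "geodesic_step_sum (\<lambda>u w' w. f u w') i = b i * (\<Sum>u<n. \<Sum>w'<n. if d u w' = i then f u w' else 0)"
proof -
  have "(\<Sum>w<n. if d u w' = i \<and> E w' w \<and> d u w = Suc i then f u w' else 0) =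
      (if d u w' = i then b i * f u w' else 0)" if "u < n" "w' < n" for u w'
    using card_nbrs_at_dist[OF that, of "Suc i"] by (auto simp: sum_if_const)
  then show ?thesis
    unfolding geodesic_step_sum_def sum_distrib_left by (intro sum.cong refl) auto
qed

lemma geodesic_step_sum_last:
  fixes f :: "nat \<Rightarrow> nat \<Rightarrow> real"
  shows "geodesic_step_sum (\<lambda>u w' w. f u w) i =
    c (Suc i) * (\<Sum>u<n. \<Sum>w<n. if d u w = Suc i then f u w else 0)"
proof -
  have inner: "(\<Sum>w'<n. if d u w' = i \<and> E w' w \<and> d u w = Suc i then f u w else 0) =
      c (Suc i) * (if d u w = Suc i then f u w else 0)" if "u < n" "w < n" for u w
  proof -
    have "{w'. w' < n \<and> d u w' = i \<and> E w' w} = {w'. w' < n \<and> E w w' \<and> d u w' = i}"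
      by (auto dest: edge_sym)
    then show ?thesis using card_nbrs_at_dist[OF that, of i] by (auto simp: sum_if_const)
  qed
  have "geodesic_step_sum (\<lambda>u w' w. f u w) i =
      (\<Sum>u<n. \<Sum>w<n. \<Sum>w'<n. if d u w' = i \<and> E w' w \<and> d u w = Suc i then f u w else 0)"
    unfolding geodesic_step_sum_def by (rule sum.cong[OF refl], rule sum.swap)
  also have "\<dots> = (\<Sum>u<n. \<Sum>w<n. c (Suc i) * (if d u w = Suc i then f u w else 0))"
    using inner by (intro sum.cong refl) auto
  finally show ?thesis by (simp only: sum_distrib_left)
qed

lemma geodesic_step_sum_edge:
  fixes f :: "nat \<Rightarrow> nat \<Rightarrow> real"
  assumes e: "E x y"
  shows "geodesic_step_sum (\<lambda>u w' w. f w' w) i =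
    pair_count x y i (Suc i) * (\<Sum>w'<n. \<Sum>w<n. if E w' w then f w' w else 0)"
proof -
  have inner: "(\<Sum>u<n. if d u w' = i \<and> E w' w \<and> d u w = Suc i then f w' w else 0) =
      pair_count x y i (Suc i) * (if E w' w then f w' w else 0)" if "w' < n" "w < n" for w' w
  proof -
    have "{u. u < n \<and> d u w' = i \<and> d u w = Suc i} = {u. u < n \<and> d w' u = i \<and> d w u = Suc i}"
      using dist_commute that by auto
    then show ?thesis using pair_count_edge_eq[OF _ e]
      by (auto simp: sum_if_const pair_count_def)
  qed
  have "geodesic_step_sum (\<lambda>u w' w. f w' w) i =
      (\<Sum>w'<n. \<Sum>w<n. \<Sum>u<n. if d u w' = i \<and> E w' w \<and> d u w = Suc i then f w' w else 0)"
    unfolding geodesic_step_sum_def by (subst sum.swap) (rule sum.cong[OF refl], rule sum.swap)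
  also have "\<dots> = (\<Sum>w'<n. \<Sum>w<n. pair_count x y i (Suc i) * (if E w' w then f w' w else 0))"
    using inner by (intro sum.cong refl) auto
  finally show ?thesis by (simp only: sum_distrib_left)
qed

text \<open>Every pair at distance i + 1 is a pair at distance i followed by an edge. Summing the
  Cauchy-Schwarz bound over all such paths counts each pair at distance i exactly b i times, each
  pair at distance i + 1 exactly c (i + 1) times, and each edge \<open>pair_count x y i (Suc i)\<close> times.\<close>

lemma dist_energy_step:
  assumes s: "s^2 = 1" and e: "E x y"
  shows "real i * c (Suc i) * dist_energy f s (Suc i) \<le>
    (real i + 1) * b i * dist_energy f s i + real i * (real i + 1) * pair_count x y i (Suc i) * dist_energy f s 1"
proof -
  define X1 where "X1 u w' = (f u - s^i * f w')^2" for u w'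
  define X2 where "X2 u w = (f u - s^(Suc i) * f w)^2" for u w
  define X3 where "X3 w' w = (f w' - s * f w)^2" for w' w
  have S1: "geodesic_step_sum (\<lambda>u w' w. X1 u w') i = b i * dist_energy f s i"
    unfolding geodesic_step_sum_first dist_energy_def X1_def ..
  have S2: "geodesic_step_sum (\<lambda>u w' w. X2 u w) i = c (Suc i) * dist_energy f s (Suc i)"
    unfolding geodesic_step_sum_last dist_energy_def X2_def ..
  have S3: "geodesic_step_sum (\<lambda>u w' w. X3 w' w) i = pair_count x y i (Suc i) * dist_energy f s 1"
    unfolding geodesic_step_sum_edge[OF e] dist_energy_1 X3_def ..
  have pointwise: "real i * X2 u w \<le> (real i + 1) * X1 u w' + real i * (real i + 1) * X3 w' w" for u w' w
  proof -
    have "f u - s^(Suc i) * f w = (f u - s^i * f w') + s^i * (f w' - s * f w)" by (simp add: algebra_simps)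
    moreover have "(s^i)^2 = 1" using s by (metis power_mult_distrib power_one power2_eq_square power_mult)
    ultimately show ?thesis unfolding X1_def X2_def X3_def using square_add_le_weighted by metis
  qed
  have "real i * (c (Suc i) * dist_energy f s (Suc i)) = geodesic_step_sum (\<lambda>u w' w. real i * X2 u w) i"
    unfolding S2[symmetric] geodesic_step_sum_def sum_distrib_left by (intro sum.cong refl) auto
  also have "\<dots> \<le> geodesic_step_sum (\<lambda>u w' w. (real i + 1) * X1 u w' + real i * (real i + 1) * X3 w' w) i"
    unfolding geodesic_step_sum_def by (intro sum_mono) (auto simp: pointwise)
  also have "\<dots> = (real i + 1) * geodesic_step_sum (\<lambda>u w' w. X1 u w') i
      + real i * (real i + 1) * geodesic_step_sum (\<lambda>u w' w. X3 w' w) i"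
    unfolding geodesic_step_sum_def sum_distrib_left sum.distrib[symmetric] by (intro sum.cong refl) auto
  finally show ?thesis unfolding S1 S3 by (simp add: algebra_simps)
qed

lemma k_mult_dist_energy_le:
  assumes k: "k_regular n E k" and x: "x < n" and e: "E x y" and s: "s^2 = 1"
  shows "1 \<le> i \<Longrightarrow> i \<le> D \<Longrightarrow> real k * dist_energy f s i \<le> (real i)^2 * k_dist n E x i * dist_energy f s 1"
proof (induction i)
  case (Suc i)
  show ?case
  proof (cases "i = 0")
    case True
    then show ?thesis using k_dist_1[OF k x] by simp
  next
    case False
    have iD: "Suc i \<le> D" using Suc.prems by simp
    have IH: "real k * dist_energy f s i \<le> (real i)^2 * k_dist n E x i * dist_energy f s 1"
      using Suc.IH False iD by simp
    have Q1: "dist_energy f s 1 \<ge> 0" by (rule dist_energy_nonneg)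
    show ?thesis
    proof (cases "c (Suc i) = 0")
      case True
      have "dist_energy f s (Suc i) = 0" unfolding dist_energy_def
        by (intro sum.neutral ballI) (use dist_ne_Suc_if_c_eq_0[OF True iD] in auto)
      then show ?thesis using Q1 by simp
    next
      case c: False
      let ?\<tau> = "pair_count x y i (Suc i)" and ?Q = "dist_energy f s"
      have k\<tau>: "real k * ?\<tau> = real (k_dist n E x i) * b i"
        using k_mult_pair_count_edge[OF k x e, of i] by (metis of_nat_mult)
      have kb: "real (k_dist n E x i) * b i = real (k_dist n E x (Suc i)) * c (Suc i)"
        using k_dist_mult_b[OF x] by (metis of_nat_mult)
      have "real i * c (Suc i) * (real k * ?Q (Suc i)) = real k * (real i * c (Suc i) * ?Q (Suc i))"
        by (simp add: algebra_simps)
      also have "\<dots> \<le> real k * ((real i + 1) * b i * ?Q i + real i * (real i + 1) * ?\<tau> * ?Q 1)"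
        by (rule mult_left_mono[OF dist_energy_step[OF s e]]) simp
      also have "\<dots> = (real i + 1) * b i * (real k * ?Q i) + real i * (real i + 1) * (real k * ?\<tau>) * ?Q 1"
        by (simp add: algebra_simps)
      also have "\<dots> \<le> (real i + 1) * b i * ((real i)^2 * k_dist n E x i * ?Q 1)
          + real i * (real i + 1) * (real k * ?\<tau>) * ?Q 1"
        by (intro add_right_mono mult_left_mono[OF IH]) simp
      also have "\<dots> = real i * (real i + 1)^2 * (real (k_dist n E x i) * b i) * ?Q 1"
        unfolding k\<tau> by (simp add: algebra_simps power2_eq_square)
      also have "\<dots> = real i * c (Suc i) * ((real (Suc i))^2 * k_dist n E x (Suc i) * ?Q 1)"
        unfolding kb by (simp add: algebra_simps)
      finally have "real i * c (Suc i) * (real k * ?Q (Suc i))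
          \<le> real i * c (Suc i) * ((real (Suc i))^2 * k_dist n E x (Suc i) * ?Q 1)" .
      moreover have "real i * c (Suc i) > 0" using False c by simp
      ultimately show ?thesis by (simp add: mult_le_cancel_left_pos)
    qed
  qed
qed simp

lemma sum_edges_square:
  fixes f :: "nat \<Rightarrow> real"
  assumes k: "k_regular n E k"
  shows "(\<Sum>u<n. \<Sum>w<n. if E u w then (f u)^2 else 0) = real k * (\<Sum>u<n. (f u)^2)"
    and "(\<Sum>u<n. \<Sum>w<n. if E u w then (f w)^2 else 0) = real k * (\<Sum>u<n. (f u)^2)"
proof -
  have deg: "card {w. w < n \<and> E u w} = k" "card {w. w < n \<and> E w u} = k" if "u < n" for u
  proof -
    show "card {w. w < n \<and> E u w} = k" using k that unfolding k_regular_def by blast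
    moreover have "{w. w < n \<and> E w u} = {w. w < n \<and> E u w}" by (auto dest: edge_sym)
    ultimately show "card {w. w < n \<and> E w u} = k" by simp
  qed
  show "(\<Sum>u<n. \<Sum>w<n. if E u w then (f u)^2 else 0) = real k * (\<Sum>u<n. (f u)^2)"
    by (simp add: sum_if_const deg sum_distrib_left)
  have "(\<Sum>u<n. \<Sum>w<n. if E u w then (f w)^2 else 0) = (\<Sum>w<n. \<Sum>u<n. if E u w then (f w)^2 else 0)"
    by (rule sum.swap)
  also have "\<dots> = real k * (\<Sum>u<n. (f u)^2)" by (simp add: sum_if_const deg sum_distrib_left)
  finally show "(\<Sum>u<n. \<Sum>w<n. if E u w then (f w)^2 else 0) = real k * (\<Sum>u<n. (f u)^2)" .
qed

lemma dist_energy_1_eq: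
  fixes f :: "nat \<Rightarrow> real"
  assumes k: "k_regular n E k" and s: "s^2 = 1"
  shows "dist_energy f s 1 =
    2 * k * (\<Sum>u<n. (f u)^2) - 2 * s * (\<Sum>u<n. \<Sum>w<n. if E u w then f u * f w else 0)"
proof -
  have "dist_energy f s 1 = (\<Sum>u<n. \<Sum>w<n. (if E u w then (f u)^2 else 0) + (if E u w then (f w)^2 else 0)
      - 2 * s * (if E u w then f u * f w else 0))"
    unfolding dist_energy_1 using s by (intro sum.cong refl) (auto simp: power2_eq_square algebra_simps)
  also have "\<dots> = (\<Sum>u<n. \<Sum>w<n. if E u w then (f u)^2 else 0) + (\<Sum>u<n. \<Sum>w<n. if E u w then (f w)^2 else 0)
      - 2 * s * (\<Sum>u<n. \<Sum>w<n. if E u w then f u * f w else 0)"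
    by (simp only: sum.distrib sum_subtractf sum_distrib_left)
  finally show ?thesis using sum_edges_square[OF k] by simp
qed

lemma card_dist_ne:
  assumes "u < n" "x < n"
  shows "card {w. w < n \<and> d u w \<noteq> t} = n - k_dist n E x t"
proof -
  have "{w. w < n \<and> d u w \<noteq> t} = {..<n} - {w. w < n \<and> d u w = t}" by auto
  moreover have "card ({..<n} - {w. w < n \<and> d u w = t}) = n - k_dist n E u t"
    unfolding k_dist_def by (subst card_Diff_subset) auto
  ultimately have "card {w. w < n \<and> d u w \<noteq> t} = n - k_dist n E u t" by simp
  then show ?thesis using k_dist_eq[OF assms] by simp
qed

lemma sum_dist_ne_square_diff_le:
  fixes f :: "nat \<Rightarrow> real"
  assumes x: "x < n" and \<sigma>: "\<sigma>^2 = 1"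
  shows "(\<Sum>u<n. \<Sum>w<n. if d u w \<noteq> t then (f u - \<sigma> * f w)^2 else 0)
    \<le> 4 * (real n - k_dist n E x t) * (\<Sum>u<n. (f u)^2)"
proof -
  let ?m = "real n - k_dist n E x t"
  have m: "real (card {w. w < n \<and> d u w \<noteq> t}) = ?m" if "u < n" for u
    using card_dist_ne[OF that x] k_dist_le[of n E x t] by (simp add: of_nat_diff)
  have "(f u - \<sigma> * f w)^2 \<le> 2 * (f u)^2 + 2 * (f w)^2" for u w
  proof -
    have "2 * (f u)^2 + 2 * (f w)^2 - (f u - \<sigma> * f w)^2 = (f u + \<sigma> * f w)^2"
      using \<sigma> by (simp add: power2_eq_square algebra_simps)
    then show ?thesis using zero_le_power2[of "f u + \<sigma> * f w"] by linarith
  qed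
  then have "(\<Sum>u<n. \<Sum>w<n. if d u w \<noteq> t then (f u - \<sigma> * f w)^2 else 0)
      \<le> (\<Sum>u<n. \<Sum>w<n. (if d u w \<noteq> t then 2 * (f u)^2 else 0) + (if d u w \<noteq> t then 2 * (f w)^2 else 0))"
    by (intro sum_mono) auto
  also have "\<dots> = (\<Sum>u<n. \<Sum>w<n. if d u w \<noteq> t then 2 * (f u)^2 else 0)
      + (\<Sum>u<n. \<Sum>w<n. if d u w \<noteq> t then 2 * (f w)^2 else 0)"
    by (simp only: sum.distrib)
  also have "(\<Sum>u<n. \<Sum>w<n. if d u w \<noteq> t then 2 * (f w)^2 else 0)
      = (\<Sum>w<n. \<Sum>u<n. if d u w \<noteq> t then 2 * (f w)^2 else 0)"
    by (rule sum.swap)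
  also have "(\<Sum>u<n. \<Sum>w<n. if d u w \<noteq> t then 2 * (f u)^2 else 0) = (\<Sum>u<n. ?m * (2 * (f u)^2))"
    using m by (intro sum.cong refl) (simp add: sum_if_const)
  also have "(\<Sum>w<n. \<Sum>u<n. if d u w \<noteq> t then 2 * (f w)^2 else 0) = (\<Sum>w<n. ?m * (2 * (f w)^2))"
  proof (intro sum.cong refl)
    fix w assume w: "w \<in> {..<n}"
    have "{u. u < n \<and> d u w \<noteq> t} = {u. u < n \<and> d w u \<noteq> t}" using dist_commute w by auto
    then show "(\<Sum>u<n. if d u w \<noteq> t then 2 * (f w)^2 else 0) = ?m * (2 * (f w)^2)"
      using m[of w] w by (simp add: sum_if_const)
  qed
  also have "(\<Sum>u<n. ?m * (2 * (f u)^2)) + (\<Sum>w<n. ?m * (2 * (f w)^2)) = 4 * ?m * (\<Sum>u<n. (f u)^2)"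
    by (simp add: sum_distrib_left[symmetric])
  finally show ?thesis .
qed

lemma dist_energy_ge:
  fixes f :: "nat \<Rightarrow> real"
  assumes x: "x < n" and s: "s^2 = 1" and sum0: "(\<Sum>u<n. f u) = 0"
  shows "2 * (2 * real (k_dist n E x t) - real n) * (\<Sum>u<n. (f u)^2) \<le> dist_energy f s t"
proof -
  have \<sigma>: "(s ^ t)^2 = 1" using s by (metis power_mult_distrib power_one power2_eq_square)
  have "dist_energy f s t = (\<Sum>u<n. \<Sum>w<n. (f u - s ^ t * f w)^2)
      - (\<Sum>u<n. \<Sum>w<n. if d u w \<noteq> t then (f u - s ^ t * f w)^2 else 0)"
    unfolding dist_energy_def by (simp add: sum_subtractf[symmetric]) (intro sum.cong refl, auto)
  moreover have "2 * (2 * real (k_dist n E x t) - real n) * (\<Sum>u<n. (f u)^2)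
      = 2 * real n * (\<Sum>u<n. (f u)^2) - 4 * (real n - k_dist n E x t) * (\<Sum>u<n. (f u)^2)"
    by (simp add: algebra_simps)
  ultimately show ?thesis
    using sum_pairs_square_diff[OF sum0 \<sigma>] sum_dist_ne_square_diff_le[OF x \<sigma>, of t f] by linarith
qed

lemma edge_form_le:
  fixes f :: "nat \<Rightarrow> real"
  assumes k: "k_regular n E k" "0 < k" and x: "x < n" and t: "1 \<le> t" "t \<le> D"
    and many_at_t: "3 / 4 * real n \<le> real (k_dist n E x t)"
    and sum0: "(\<Sum>u<n. f u) = 0" and s: "s^2 = 1"
  shows "s * (\<Sum>u<n. \<Sum>w<n. if E u w then f u * f w else 0)
    \<le> (1 - 1 / (2 * (real D)^2)) * k * (\<Sum>u<n. (f u)^2)"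
proof -
  define N where "N = (\<Sum>u<n. (f u)^2)"
  define Q1 where "Q1 = dist_energy f s 1"
  have N: "0 \<le> N" unfolding N_def by (intro sum_nonneg) auto
  have "card {u. u < n \<and> E x u} = k" using k x unfolding k_regular_def by blast
  then have "{u. u < n \<and> E x u} \<noteq> {}" using k(2) by (intro notI) simp
  then obtain y where e: "E x y" by blast
  have D: "0 < real D" using t by simp
  have "real n \<le> 2 * (2 * real (k_dist n E x t) - real n)" using many_at_t by simp
  then have "real n * N \<le> 2 * (2 * real (k_dist n E x t) - real n) * N" by (rule mult_right_mono[OF _ N])
  also have "\<dots> \<le> dist_energy f s t" using dist_energy_ge[OF x s sum0, of t] unfolding N_def .
  finally have "real k * (real n * N) \<le> real k * dist_energy f s t" by (simp add: mult_left_mono)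
  also have "\<dots> \<le> (real t)^2 * k_dist n E x t * Q1"
    unfolding Q1_def by (rule k_mult_dist_energy_le[OF k(1) x e s t])
  also have "\<dots> \<le> (real D)^2 * n * Q1"
    using t k_dist_le[of n E x t] dist_energy_nonneg[of f s 1] unfolding Q1_def
    by (intro mult_right_mono mult_mono power_mono) auto
  finally have "(real k * N) * real n \<le> ((real D)^2 * Q1) * real n" by (simp only: ac_simps)
  then have "real k * N \<le> (real D)^2 * Q1" using x by (simp add: mult_le_cancel_right)
  then have "real k * N / (real D)^2 \<le> Q1" using D by (simp add: divide_le_eq mult.commute)
  moreover have "Q1 = 2 * (real k * N) - 2 * (s * (\<Sum>u<n. \<Sum>w<n. if E u w then f u * f w else 0))"
    using dist_energy_1_eq[OF k(1) s, of f] unfolding N_def Q1_def by simp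
  moreover have "2 * ((1 - 1 / (2 * (real D)^2)) * k * N) = 2 * (real k * N) - real k * N / (real D)^2"
    using D by (simp add: field_simps)
  ultimately have "2 * (s * (\<Sum>u<n. \<Sum>w<n. if E u w then f u * f w else 0))
      \<le> 2 * ((1 - 1 / (2 * (real D)^2)) * k * N)"
    by linarith
  then show ?thesis unfolding N_def by simp
qed

end

lemma (in distance_regular_graph) zero_weight_spectral_radius_adj_matrix_le:
  assumes k: "k_regular n E k" and t: "1 \<le> t" "t \<le> D" and x: "x < n"
    and many_at_t: "3 / 4 * real n \<le> real (k_dist n E x t)"
  shows "zero_weight_spectral_radius (adj_matrix n E) \<le> real k * (1 - 1 / (2 * (real D)^2))"
proof -
  let ?\<mu> = "real k * (1 - 1 / (2 * (real D)^2))"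
  have "0 < k_dist n E x t" using many_at_t x by (simp add: order_less_le_trans)
  then obtain w where w: "w < n" "d x w = t" unfolding k_dist_def by (auto simp: card_gt_0_iff)
  then have "w \<noteq> x" using t x dist_eq_0_iff[OF x x] by auto
  then have n: "2 \<le> n" using w x by linarith
  obtain m where "t = Suc m" using t by (cases t) auto
  then obtain w' where "E w' w" using dist_SucE[OF x w(1)] w by blast
  then have "w \<in> {u. u < n \<and> E w' u}" using w by simp
  then have "0 < card {u. u < n \<and> E w' u}" by (auto simp: card_gt_0_iff)
  moreover have "card {u. u < n \<and> E w' u} = k"
    using k edge_vertices[OF \<open>E w' w\<close>] unfolding k_regular_def by blast
  ultimately have k_pos: "0 < k" by simp
  let ?A = "adj_matrix n E"
  have A: "?A \<in> carrier_mat n n" by (simp add: adj_matrix_def)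
  have entries: "?A $$ (i, j) = (if E i j then 1 else 0)" if "i < n" "j < n" for i j
    using that by (simp add: adj_matrix_def)
  have sym: "?A $$ (i, j) = ?A $$ (j, i)" if "i < n" "j < n" for i j
    using that entries edge_sym by auto
  have rows: "(\<Sum>j<n. ?A $$ (i, j)) = real k" if "i < n" for i
    using that k entries by (simp add: sum_if_const k_regular_def)
  have QF: "\<bar>\<Sum>u<n. \<Sum>w<n. ?A $$ (u, w) * f u * f w\<bar> \<le> ?\<mu> * (\<Sum>u<n. (f u)^2)"
    if sum0: "(\<Sum>u<n. f u) = 0" for f
  proof -
    have "(\<Sum>u<n. \<Sum>w<n. ?A $$ (u, w) * f u * f w) = (\<Sum>u<n. \<Sum>w<n. if E u w then f u * f w else 0)"
      using entries by (intro sum.cong refl) auto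
    then show ?thesis
      using edge_form_le[OF k k_pos x t many_at_t sum0, of 1]
        edge_form_le[OF k k_pos x t many_at_t sum0, of "-1"]
      by (simp add: abs_le_iff algebra_simps)
  qed
  have "?\<mu> < real k" using k_pos t by simp
  with A n sym rows QF show ?thesis by (rule zero_weight_spectral_radius_le)
qed

lemma distance_regularE:
  assumes "distance_regular n E"
  obtains a b c where "distance_regular_graph n E a b c"
  using assms unfolding distance_regular_def distance_regular_graph_def connected_graph_def
    distance_regular_graph_axioms_def by blast

theorem theorem3:
  fixes d :: nat
  assumes "d \<ge> 2"
  shows "\<exists>\<epsilon>::real. \<epsilon> > 0 \<and> (\<exists>\<eta>::real. \<eta> > 0 \<and>
    (\<forall>n E k. distance_regular n E \<and> diameter n E = d \<and> k_regular n E k \<and>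
       (\<exists>t \<in> {1..d}. \<exists>v<n. real (k_dist n E v t) \<ge> (1 - \<epsilon>) * real n)
       \<longrightarrow> zero_weight_spectral_radius (adj_matrix n E) \<le> real k * (1 - \<eta>)))"
proof (rule exI[of _ "1 / 4"], intro conjI exI[of _ "1 / (2 * (real d)^2)"] allI impI)
  fix n E k
  assume "distance_regular n E \<and> diameter n E = d \<and> k_regular n E k \<and>
    (\<exists>t \<in> {1..d}. \<exists>v<n. real (k_dist n E v t) \<ge> (1 - 1 / 4) * real n)"
  then obtain a b c t v where "distance_regular_graph n E a b c" and diam: "diameter n E = d"
    and "k_regular n E k" "t \<in> {1..d}" "v < n" "3 / 4 * real n \<le> real (k_dist n E v t)"
    by (auto elim: distance_regularE)
  then have "zero_weight_spectral_radius (adj_matrix n E) \<le> real k * (1 - 1 / (2 * (real (diameter n E))^2))"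
    by (intro distance_regular_graph.zero_weight_spectral_radius_adj_matrix_le) auto
  then show "zero_weight_spectral_radius (adj_matrix n E) \<le> real k * (1 - 1 / (2 * (real d)^2))"
    unfolding diam .
qed (use assms in auto)

end
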